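(* Consider a single base station (BS) $m$ with $a_m$ active antennas, $N_m$ available physical resource blocks (PRBs) of bandwidth $\bar b$, serving a set $\mu(m)$ of UEs with zero-forcing precoding, under fixed inter-cell interference. For UE $k\in\mu(m)$ let $\underline{R}_k>0$ be its minimum rate requirement, $\beta_k>0$ its large-scale fading, $I_k\ge 0$ the (fixed) inter-cell interference and $N>0$ the noise power at UE $k$, and let $L$ denote the number of UEs spatially multiplexed on a PRB ($L=1$ for no spatial multiplexing (NSM), $L=|\mu(m)|$ for spatial multiplexing (SM)), with $a_m>L$. When UE $k$ is given transmit power $p>0$ on each of its PRBs, the number of PRBs it needs to meet its rate requirement is $$\alpha_k(p)=\frac{\underline{R}_k}{\bar b\,\log_2\!\left(1+\frac{(a_m-L)\beta_k p}{I_k+N}\right)}.$$ The power-allocation-dependent part of the BS power consumption is $$P_m(\mathbf p)=\sum_{k\in\mu(m)}\alpha_k(p_k)\left(\frac{1}{\eta_{PA}}p_k+C\right),$$ where $\eta_{PA}\in(0,1]$ is the power amplifier efficiency and $C>0$ is the per-PRB signal-processing power cost. Let $p^*$ denote the candidate optimal power(s) described below, and suppose that for every $\tilde p>p^*$ the condition $$\alpha_k(\tilde p)\tilde p-\alpha_k(p^* )p^*\ \ge\ \delta\, C\,\eta_{PA},\qquad \delta=\alpha_k(p^* )-\alpha_k(\tilde p),$$ holds. Then: (i) in the NSM case, where all UEs of BS $m$ receive the same power $p_m$ and the PRBs are shared so that $\sum_{k\in\mu(m)}\alpha_k(p_m)\le N_m$ is required, the optimal power allocation (one that satisfies all rate requirements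 while minimizing $P_m$) is the power $p_m^*$ satisfying $\sum_{k\in\mu(m)}\alpha_k(p_m^* )=N_m$; (ii) in the SM case, where each UE may use up to $N_m$ PRBs, i.e. $\alpha_k(p_k)\le N_m$ for each $k$, the optimal individual power allocation $\mathbf p^*=(p_k^* )_{k\in\mu(m)}$ is the one for which every UE is assigned the maximum number of available PRBs, i.e. $\alpha_k(p_k^* )=N_m$ for all $k\in\mu(m)$.
   Context: Downlink multi-user massive MIMO cell with zero-forcing precoding; achievable rate of UE $k$ using $\alpha$ PRBs each with power $p$ is $\bar b\,\alpha\log_2(1+(a_m-L)\beta_k p/(I_k+N))$. Powers are equal across all PRBs assigned to a given UE; numbers of PRBs are treated as real quantities given by $\alpha_k(p)$. Powers $\tilde p<p^*$ are infeasible in the sense that they would require more PRBs than available (leading to outages). *)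

theory Defs
  imports Complex_Main
begin

definition prb_need ::
  "real \<Rightarrow> nat \<Rightarrow> nat \<Rightarrow> ('u \<Rightarrow> real) \<Rightarrow> ('u \<Rightarrow> real) \<Rightarrow> ('u \<Rightarrow> real) \<Rightarrow> real
    \<Rightarrow> 'u \<Rightarrow> real \<Rightarrow> real" where
  "prb_need bb a L Rmin beta I N k p =
     Rmin k / (bb * log 2 (1 + (real a - real L) * beta k * p / (I k + N)))"

definition bs_power ::
  "real \<Rightarrow> nat \<Rightarrow> nat \<Rightarrow> ('u \<Rightarrow> real) \<Rightarrow> ('u \<Rightarrow> real) \<Rightarrow> ('u \<Rightarrow> real) \<Rightarrow> real
    \<Rightarrow> real \<Rightarrow> real \<Rightarrow> 'u set \<Rightarrow> ('u \<Rightarrow> real) \<Rightarrow> real" where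
  "bs_power bb a L Rmin beta I N eta C U p =
     (\<Sum>k\<in>U. prb_need bb a L Rmin beta I N k (p k) * (p k / eta + C))"

end

theory Submission
  imports Defs
begin

text \<open>Both optimality claims reduce to two facts about a single UE. Its PRB need
  \<open>\<alpha>\<^sub>k\<close> is strictly decreasing in the power, so a feasible power can never lie below
  the power \<open>p\<^sup>*\<close> that exhausts the PRBs. Above \<open>p\<^sup>*\<close> the hypothesis on
  \<open>\<alpha>\<^sub>k(p) p - \<alpha>\<^sub>k(p\<^sup>*) p\<^sup>*\<close> says exactly that the extra transmit power outweighs the
  signal-processing power saved on fewer PRBs, so every summand of \<open>P\<^sub>m\<close> grows.\<close>

lemma prb_need_strict_antimono:
  assumes "Rmin k > 0" "beta k > 0" "I k \<ge> 0" "N > 0" "bb > 0" "L < a"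
    and "0 < p" "p < q"
  shows "prb_need bb a L Rmin beta I N k q < prb_need bb a L Rmin beta I N k p"
proof -
  define c where "c = (real a - real L) * beta k / (I k + N)"
  have "c > 0"
    unfolding c_def using assms by simp
  then have "0 < c * p" "c * p < c * q"
    using assms by simp_all
  then have "0 < log 2 (1 + c * p)" "log 2 (1 + c * p) < log 2 (1 + c * q)"
    by simp_all
  then have "Rmin k / (bb * log 2 (1 + c * q)) < Rmin k / (bb * log 2 (1 + c * p))"
    using assms by (simp add: divide_strict_left_mono)
  then show ?thesis
    unfolding prb_need_def c_def by (simp add: mult.commute mult.left_commute)
qed

lemma prb_cost_mono_above:
  fixes f :: "real \<Rightarrow> real"
  assumes "eta > 0" "ps \<le> pt"
    and "ps < pt \<Longrightarrow> (f ps - f pt) * C * eta \<le> f pt * pt - f ps * ps"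
  shows "f ps * (ps / eta + C) \<le> f pt * (pt / eta + C)"
proof (cases "ps = pt")
  case False
  then have "f ps * ps + f ps * C * eta \<le> f pt * pt + f pt * C * eta"
    using assms by (simp add: algebra_simps)
  then have "(f ps * ps + f ps * C * eta) / eta \<le> (f pt * pt + f pt * C * eta) / eta"
    using \<open>eta > 0\<close> by (simp add: divide_right_mono)
  then show ?thesis
    using \<open>eta > 0\<close> by (simp add: add_divide_distrib algebra_simps)
qed simp

lemma bs_power_mono_above:
  assumes "eta > 0"
    and "\<And>k. k \<in> U \<Longrightarrow> pstar k \<le> p k"
    and "\<And>k. k \<in> U \<Longrightarrow> \<forall>pt>pstar k.
           (prb_need bb a L Rmin beta I N k (pstar k) - prb_need bb a L Rmin beta I N k pt) * C * eta
             \<le> prb_need bb a L Rmin beta I N k pt * pt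
                - prb_need bb a L Rmin beta I N k (pstar k) * pstar k"
  shows "bs_power bb a L Rmin beta I N eta C U pstar \<le> bs_power bb a L Rmin beta I N eta C U p"
  unfolding bs_power_def
  by (rule sum_mono, rule prb_cost_mono_above) (use assms in auto)

lemma bs_power_common_power_optimal:
  assumes "finite U" "U \<noteq> {}"
    and "\<forall>k\<in>U. Rmin k > 0" "\<forall>k\<in>U. beta k > 0" "\<forall>k\<in>U. I k \<ge> 0" "N > 0" "bb > 0"
    and "eta > 0" "L < a" "p > 0"
    and feasible: "(\<Sum>k\<in>U. prb_need bb a L Rmin beta I N k p)
                     \<le> (\<Sum>k\<in>U. prb_need bb a L Rmin beta I N k pstar)"
    and "\<forall>k\<in>U. \<forall>pt>pstar.
           (prb_need bb a L Rmin beta I N k pstar - prb_need bb a L Rmin beta I N k pt) * C * eta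
             \<le> prb_need bb a L Rmin beta I N k pt * pt - prb_need bb a L Rmin beta I N k pstar * pstar"
  shows "bs_power bb a L Rmin beta I N eta C U (\<lambda>_. pstar) \<le> bs_power bb a L Rmin beta I N eta C U (\<lambda>_. p)"
proof -
  have "pstar \<le> p"
  proof (rule ccontr)
    assume "\<not> pstar \<le> p"
    then have "(\<Sum>k\<in>U. prb_need bb a L Rmin beta I N k pstar) < (\<Sum>k\<in>U. prb_need bb a L Rmin beta I N k p)"
      using assms by (intro sum_strict_mono prb_need_strict_antimono) auto
    with feasible show False
      by simp
  qed
  then show ?thesis
    using assms by (intro bs_power_mono_above) auto
qed

lemma bs_power_individual_power_optimal:
  assumes "\<forall>k\<in>U. Rmin k > 0" "\<forall>k\<in>U. beta k > 0" "\<forall>k\<in>U. I k \<ge> 0" "N > 0" "bb > 0"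
    and "eta > 0" "L < a"
    and feasible: "\<forall>k\<in>U. p k > 0 \<and>
           prb_need bb a L Rmin beta I N k (p k) \<le> prb_need bb a L Rmin beta I N k (pstar k)"
    and "\<forall>k\<in>U. \<forall>pt>pstar k.
           (prb_need bb a L Rmin beta I N k (pstar k) - prb_need bb a L Rmin beta I N k pt) * C * eta
             \<le> prb_need bb a L Rmin beta I N k pt * pt
                - prb_need bb a L Rmin beta I N k (pstar k) * pstar k"
  shows "bs_power bb a L Rmin beta I N eta C U pstar \<le> bs_power bb a L Rmin beta I N eta C U p"
proof (rule bs_power_mono_above)
  show "pstar k \<le> p k" if "k \<in> U" for k
  proof (rule ccontr)
    assume "\<not> pstar k \<le> p k"
    then have "prb_need bb a L Rmin beta I N k (pstar k) < prb_need bb a L Rmin beta I N k (p k)"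
      using assms that by (intro prb_need_strict_antimono) auto
    with feasible that show False
      by fastforce
  qed
qed (use assms in auto)

theorem theorem2:
  fixes U :: "'u set"
    and Rmin beta I :: "'u \<Rightarrow> real"
    and bb N eta C :: real
    and a Nm :: nat
  assumes finU: "finite U" and neU: "U \<noteq> {}"
    and Rpos: "\<forall>k\<in>U. Rmin k > 0"
    and betapos: "\<forall>k\<in>U. beta k > 0"
    and Inn: "\<forall>k\<in>U. I k \<ge> 0"
    and Npos: "N > 0"
    and bbpos: "bb > 0"
    and eta: "0 < eta" "eta \<le> 1"
    and Cpos: "C > 0"
  shows
    \<comment> \<open>(i) NSM: L = 1, common power for all UEs, PRBs shared among UEs\<close>
    "(\<forall>pstar::real.
        a > 1 \<longrightarrow> pstar > 0
        \<longrightarrow> (\<Sum>k\<in>U. prb_need bb a 1 Rmin beta I N k pstar) = real Nm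
        \<longrightarrow> (\<forall>k\<in>U. \<forall>pt>pstar.
               prb_need bb a 1 Rmin beta I N k pt * pt - prb_need bb a 1 Rmin beta I N k pstar * pstar
                 \<ge> (prb_need bb a 1 Rmin beta I N k pstar - prb_need bb a 1 Rmin beta I N k pt) * C * eta)
        \<longrightarrow> (\<forall>p::real. p > 0 \<longrightarrow> (\<Sum>k\<in>U. prb_need bb a 1 Rmin beta I N k p) \<le> real Nm
               \<longrightarrow> bs_power bb a 1 Rmin beta I N eta C U (\<lambda>_. pstar)
                     \<le> bs_power bb a 1 Rmin beta I N eta C U (\<lambda>_. p)))
     \<and>
    \<comment> \<open>(ii) SM: L = |U|, individual powers, each UE may use up to Nm PRBs\<close>
     (\<forall>pstar::'u \<Rightarrow> real.
        a > card U \<longrightarrow> (\<forall>k\<in>U. pstar k > 0)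
        \<longrightarrow> (\<forall>k\<in>U. prb_need bb a (card U) Rmin beta I N k (pstar k) = real Nm)
        \<longrightarrow> (\<forall>k\<in>U. \<forall>pt>pstar k.
               prb_need bb a (card U) Rmin beta I N k pt * pt
                 - prb_need bb a (card U) Rmin beta I N k (pstar k) * pstar k
                 \<ge> (prb_need bb a (card U) Rmin beta I N k (pstar k)
                      - prb_need bb a (card U) Rmin beta I N k pt) * C * eta)
        \<longrightarrow> (\<forall>p::'u \<Rightarrow> real. (\<forall>k\<in>U. p k > 0 \<and> prb_need bb a (card U) Rmin beta I N k (p k) \<le> real Nm)
               \<longrightarrow> bs_power bb a (card U) Rmin beta I N eta C U pstar
                     \<le> bs_power bb a (card U) Rmin beta I N eta C U p))"
proof (intro conjI allI impI)
  show "bs_power bb a 1 Rmin beta I N eta C U (\<lambda>_. pstar) \<le> bs_power bb a 1 Rmin beta I N eta C U (\<lambda>_. p)"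
    if "a > 1" "pstar > 0" "(\<Sum>k\<in>U. prb_need bb a 1 Rmin beta I N k pstar) = real Nm"
      "\<forall>k\<in>U. \<forall>pt>pstar. (prb_need bb a 1 Rmin beta I N k pstar - prb_need bb a 1 Rmin beta I N k pt) * C * eta
         \<le> prb_need bb a 1 Rmin beta I N k pt * pt - prb_need bb a 1 Rmin beta I N k pstar * pstar"
      "p > 0" "(\<Sum>k\<in>U. prb_need bb a 1 Rmin beta I N k p) \<le> real Nm"
    for pstar p :: real
    using that assms by (intro bs_power_common_power_optimal) auto
  show "bs_power bb a (card U) Rmin beta I N eta C U pstar \<le> bs_power bb a (card U) Rmin beta I N eta C U p"
    if "a > card U" "\<forall>k\<in>U. prb_need bb a (card U) Rmin beta I N k (pstar k) = real Nm"
      "\<forall>k\<in>U. \<forall>pt>pstar k.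
         (prb_need bb a (card U) Rmin beta I N k (pstar k) - prb_need bb a (card U) Rmin beta I N k pt) * C * eta
           \<le> prb_need bb a (card U) Rmin beta I N k pt * pt
              - prb_need bb a (card U) Rmin beta I N k (pstar k) * pstar k"
      "\<forall>k\<in>U. p k > 0 \<and> prb_need bb a (card U) Rmin beta I N k (p k) \<le> real Nm"
    for pstar p :: "'u \<Rightarrow> real"
    using that assms by (intro bs_power_individual_power_optimal) auto
qed

end
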